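(* Fix integers $n\ge 1$, $m\ge 2$ and $k\in\{0,\dots,n-1\}$, and let $\mathcal{C}^k_{ac}$ be the class of all complete acyclic $k$-bounded CP-nets over $n$ variables, each of domain size $m$, viewed as concepts over the instance space $\mathcal{X}_{swap}$. Then: (1) $\mathrm{VCD}(\mathcal{C}^{n-1}_{ac})=m^n-1$; (2) $\mathrm{VCD}(\mathcal{C}^{0}_{ac})=(m-1)n$; (3) $\mathrm{VCD}(\mathcal{C}^{k}_{ac})\ge (m-1)\mathcal{M}_k=(m-1)(n-k)m^k+m^k-1$.
   Context: Variables $V=\{v_1,\dots,v_n\}$, each $v_i$ with a finite domain $D_{v_i}$ of size $m$. An outcome is an assignment of a value to every variable; $\mathcal{O}$ is the set of outcomes, and for $X\subseteq V$, $\mathcal{O}_X$ is the set of assignments to $X$ and $o[X]$ the projection of $o$ onto $X$. A CP-net $N$ specifies for each $v_i$ a parent set $Pa(v_i)\subseteq V\setminus\{v_i\}$ and a conditional preference table $\mathrm{CPT}(v_i)$ which, for each context $\gamma\in\mathcal{O}_{Pa(v_i)}$, either gives a strict total order $\succ^{v_i}_\gamma$ on $D_{v_i}$ (a "statement") or gives nothing. $N$ is complete if every CPT gives an order for every context. CP-nets are taken in minimal form: every parent actually affects the preferences of its child (no dummy parents). The graph of $N$ has an edge $(v_j,v_i)$ iff $v_j\in Pa(v_i)$; $N$ is acyclic if this graph is acyclic and $k$-bounded if $|Pa(v_i)|\le k$ for all $i$. For outcomes $o,o'$ differing only in $v_i$, with $\gamma=o[Pa(v_i)]$, going from $o$ to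 $o'$ is an improving flip if $\succ^{v_i}_\gamma$ is given and $o'[v_i]\succ^{v_i}_\gamma o[v_i]$; $N$ induces the relation $o'\succ o$ iff there is a nonempty finite sequence of improving flips from $o$ to $o'$. A swap is an ordered pair $x=(x.1,x.2)$ of outcomes differing in exactly one variable. $\mathcal{X}_{swap}$ is a fixed set of swaps containing, for each unordered pair of outcomes differing in exactly one variable, exactly one of the two ordered pairs (the choice is arbitrary but fixed). A CP-net $N$ is identified with the concept $c_N$ given by $c_N(x)=1$ if $x.1\succ x.2$ under $N$ and $c_N(x)=0$ otherwise. A set $Y$ of instances is shattered by a concept class if every labeling of $Y$ is realized by some concept of the class; $\mathrm{VCD}$ is the largest size of a shattered set. $\mathcal{M}_k=(n-k)m^k+\frac{m^k-1}{m-1}$. *)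

theory Defs
  imports Complex_Main
begin

text \<open>Variables are 0,...,n-1; the domain of every variable is {0..<m}.
  An outcome is a function nat => nat with values < m on variables and 0 elsewhere.\<close>

type_synonym outcome = "nat \<Rightarrow> nat"

definition outcomes :: "nat \<Rightarrow> nat \<Rightarrow> outcome set" where
  "outcomes n m = {u. (\<forall>i<n. u i < m) \<and> (\<forall>i. n \<le> i \<longrightarrow> u i = 0)}"

definition assignments :: "nat \<Rightarrow> nat set \<Rightarrow> outcome set" where
  "assignments m X = {g. (\<forall>i\<in>X. g i < m) \<and> (\<forall>i. i \<notin> X \<longrightarrow> g i = 0)}"

definition proj :: "nat set \<Rightarrow> outcome \<Rightarrow> outcome" where
  "proj X u = (\<lambda>i. if i \<in> X then u i else 0)"

text \<open>A CP-net is a pair (Pa, P): Pa i is the parent set of variable i, and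
  P i \<gamma> a b means  a \<succ>^i_\<gamma> b  in the CPT of variable i under context \<gamma>.\<close>
type_synonym cpnet = "(nat \<Rightarrow> nat set) \<times> (nat \<Rightarrow> outcome \<Rightarrow> nat \<Rightarrow> nat \<Rightarrow> bool)"

definition strict_total_order_on :: "nat \<Rightarrow> (nat \<Rightarrow> nat \<Rightarrow> bool) \<Rightarrow> bool" where
  "strict_total_order_on m R \<longleftrightarrow>
     (\<forall>a<m. \<not> R a a) \<and>
     (\<forall>a<m. \<forall>b<m. \<forall>c<m. R a b \<and> R b c \<longrightarrow> R a c) \<and>
     (\<forall>a<m. \<forall>b<m. a \<noteq> b \<longrightarrow> R a b \<or> R b a)"

text \<open>Complete CP-net in minimal form (no dummy parents).\<close>
definition complete_cpnet :: "nat \<Rightarrow> nat \<Rightarrow> cpnet \<Rightarrow> bool" where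
  "complete_cpnet n m N \<longleftrightarrow>
     (\<forall>i<n. fst N i \<subseteq> {0..<n} - {i}) \<and>
     (\<forall>i<n. \<forall>\<gamma>\<in>assignments m (fst N i). strict_total_order_on m (snd N i \<gamma>)) \<and>
     (\<forall>i<n. \<forall>j\<in>fst N i. \<exists>\<gamma>\<in>assignments m (fst N i). \<exists>\<gamma>'\<in>assignments m (fst N i).
         (\<forall>l. l \<noteq> j \<longrightarrow> \<gamma> l = \<gamma>' l) \<and>
         (\<exists>a<m. \<exists>b<m. snd N i \<gamma> a b \<noteq> snd N i \<gamma>' a b))"

definition cpnet_graph :: "nat \<Rightarrow> cpnet \<Rightarrow> (nat \<times> nat) set" where
  "cpnet_graph n N = {(j, i). i < n \<and> j \<in> fst N i}"

definition acyclic_cpnet :: "nat \<Rightarrow> cpnet \<Rightarrow> bool" where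
  "acyclic_cpnet n N \<longleftrightarrow> acyclic (cpnet_graph n N)"

definition bounded_cpnet :: "nat \<Rightarrow> nat \<Rightarrow> cpnet \<Rightarrow> bool" where
  "bounded_cpnet n k N \<longleftrightarrow> (\<forall>i<n. card (fst N i) \<le> k)"

definition differ_in_one :: "nat \<Rightarrow> outcome \<Rightarrow> outcome \<Rightarrow> bool" where
  "differ_in_one n u u' \<longleftrightarrow> (\<exists>i<n. u i \<noteq> u' i \<and> (\<forall>j. j \<noteq> i \<longrightarrow> u j = u' j))"

definition improving_flips :: "nat \<Rightarrow> nat \<Rightarrow> cpnet \<Rightarrow> (outcome \<times> outcome) set" where
  "improving_flips n m N = {(u, u'). u \<in> outcomes n m \<and> u' \<in> outcomes n m \<and>
      (\<exists>i<n. (\<forall>j. j \<noteq> i \<longrightarrow> u j = u' j) \<and> snd N i (proj (fst N i) u) (u' i) (u i))}"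

definition prefers :: "nat \<Rightarrow> nat \<Rightarrow> cpnet \<Rightarrow> outcome \<Rightarrow> outcome \<Rightarrow> bool" where
  "prefers n m N u' u \<longleftrightarrow> (u, u') \<in> (improving_flips n m N)\<^sup>+"

definition swaps :: "nat \<Rightarrow> nat \<Rightarrow> (outcome \<times> outcome) set" where
  "swaps n m = {(u, u'). u \<in> outcomes n m \<and> u' \<in> outcomes n m \<and> differ_in_one n u u'}"

definition is_Xswap :: "nat \<Rightarrow> nat \<Rightarrow> (outcome \<times> outcome) set \<Rightarrow> bool" where
  "is_Xswap n m X \<longleftrightarrow> X \<subseteq> swaps n m \<and>
     (\<forall>(a, b)\<in>swaps n m. ((a, b) \<in> X) \<noteq> ((b, a) \<in> X))"

definition concept_of :: "nat \<Rightarrow> nat \<Rightarrow> cpnet \<Rightarrow> (outcome \<times> outcome) \<Rightarrow> bool" where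
  "concept_of n m N x = prefers n m N (fst x) (snd x)"

definition C_ac :: "nat \<Rightarrow> nat \<Rightarrow> nat \<Rightarrow> ((outcome \<times> outcome) \<Rightarrow> bool) set" where
  "C_ac n m k = {concept_of n m N | N. complete_cpnet n m N \<and> acyclic_cpnet n N \<and> bounded_cpnet n k N}"

definition shatters :: "('x \<Rightarrow> bool) set \<Rightarrow> 'x set \<Rightarrow> bool" where
  "shatters C Y \<longleftrightarrow> (\<forall>L\<subseteq>Y. \<exists>c\<in>C. \<forall>y\<in>Y. c y \<longleftrightarrow> y \<in> L)"

text \<open>VC dimension of a concept class over instance space X (all relevant X here are finite).\<close>
definition VCD :: "'x set \<Rightarrow> ('x \<Rightarrow> bool) set \<Rightarrow> nat" where
  "VCD X C = Sup {card Y | Y. Y \<subseteq> X \<and> finite Y \<and> shatters C Y}"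

definition M_k :: "nat \<Rightarrow> nat \<Rightarrow> nat \<Rightarrow> real" where
  "M_k n m k = real (n - k) * real m ^ k + (real m ^ k - 1) / (real m - 1)"

end

(*
  In an acyclic CP-net the improving flips form an acyclic relation: weighting the
  rank of each variable's value in its current order by a power of n m + 1 that decreases with the
  depth of the variable gives a potential that increases along every flip.  Hence, for any
  labelling of a shattered set of swaps, reversing the swaps labelled 1 yields an acyclic
  orientation of them, so the swaps form a forest on the m^n outcomes and there are at most
  m^n - 1 of them.  Without parents all flips of a variable follow one order on its m values,
  which allows at most m - 1 swaps per variable.

  Give variable i the first min i k variables as parents, and for every assignment
  \<gamma> to them take the m - 1 swaps that move variable i between 0 and a nonzero value, all other
  variables being set by \<gamma>.  Any labelling of these (m - 1)(n - k) m^k + m^k - 1 swaps is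
  realised by choosing, for each i and \<gamma>, an order placing the right values above 0; removing
  the dummy parents of that net gives a member of the class.
*)
theory Submission
  imports Defs
begin

section \<open>Forests\<close>

definition reorient :: "('v \<times> 'v) set \<Rightarrow> ('v \<times> 'v) set \<Rightarrow> ('v \<times> 'v) set" where
  "reorient E L = L\<inverse> \<union> (E - L)"

definition sym_reach :: "('v \<times> 'v) set \<Rightarrow> ('v \<times> 'v) set" where
  "sym_reach E = (E \<union> E\<inverse>)\<^sup>*"

definition components :: "'v set \<Rightarrow> ('v \<times> 'v) set \<Rightarrow> 'v set set" where
  "components V E = (\<lambda>v. sym_reach E `` {v}) ` V"

lemma sym_reach_sym: "(a, b) \<in> sym_reach E \<Longrightarrow> (b, a) \<in> sym_reach E"
  unfolding sym_reach_def by (metis converse_Un converse_converse rtrancl_converseI sup_commute)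

lemma sym_reach_mono: "E \<subseteq> E' \<Longrightarrow> sym_reach E \<subseteq> sym_reach E'"
  unfolding sym_reach_def by (meson Un_mono converse_mono rtrancl_mono)

lemma sym_reach_trans: "(a, b) \<in> sym_reach E \<Longrightarrow> (b, c) \<in> sym_reach E \<Longrightarrow> (a, c) \<in> sym_reach E"
  unfolding sym_reach_def by (rule rtrancl_trans)

text \<open>Orient every edge towards the endpoint closer to \<open>y\<close>; a shortest undirected path
  to \<open>y\<close> then becomes a directed one.\<close>
lemma sym_reach_reorient_path:
  assumes "(x, y) \<in> sym_reach S"
  shows "\<exists>L\<subseteq>S. (x, y) \<in> (reorient S L)\<^sup>*"
proof -
  let ?R = "S \<union> S\<inverse>"
  define dist where "dist v = (LEAST k. (v, y) \<in> ?R ^^ k)" for v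
  define L where "L = {(p, q) \<in> S. dist p < dist q}"
  have path_dist: "(v, y) \<in> ?R ^^ dist v" if "(v, y) \<in> ?R ^^ j" for v j
    unfolding dist_def using that by (rule LeastI)
  have dist_le: "dist v \<le> j" if "(v, y) \<in> ?R ^^ j" for v j
    unfolding dist_def using that by (rule Least_le)
  have "(v, y) \<in> (reorient S L)\<^sup>*" if "dist v = k" "(v, y) \<in> ?R ^^ j" for v j k
    using that
  proof (induction k arbitrary: v j)
    case 0
    then show ?case using path_dist[OF "0.prems"(2)] by simp
  next
    case (Suc k)
    then obtain w where vw: "(v, w) \<in> ?R" and wy: "(w, y) \<in> ?R ^^ k"
      using path_dist[OF Suc.prems(2)] by (metis relpow_Suc_D2)
    have "(v, y) \<in> ?R ^^ Suc (dist w)"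
      using vw path_dist[OF wy] by (rule relpow_Suc_I2)
    then have "dist w = k" using dist_le[OF wy] dist_le[of v] Suc.prems(1) by fastforce
    then have "(v, w) \<in> reorient S L" "(w, y) \<in> (reorient S L)\<^sup>*"
      using vw Suc.prems(1) Suc.IH[OF _ wy] unfolding reorient_def L_def by auto
    then show ?case by (rule converse_rtrancl_into_rtrancl)
  qed
  moreover obtain j where "(x, y) \<in> ?R ^^ j"
    using assms rtrancl_power unfolding sym_reach_def by blast
  moreover have "L \<subseteq> S" unfolding L_def by auto
  ultimately show ?thesis by blast
qed

lemma card_components_insert_less:
  assumes "finite V" "a \<in> V" "b \<in> V" "(a, b) \<notin> sym_reach E"
  shows "card (components V (insert (a, b) E)) < card (components V E)"
proof -
  let ?E' = "insert (a, b) E"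
  define merge where "merge C = sym_reach ?E' `` C" for C
  have merge_class: "merge (sym_reach E `` {v}) = sym_reach ?E' `` {v}" for v
  proof
    show "merge (sym_reach E `` {v}) \<subseteq> sym_reach ?E' `` {v}"
    proof
      fix x assume "x \<in> merge (sym_reach E `` {v})"
      then obtain w where "(v, w) \<in> sym_reach E" "(w, x) \<in> sym_reach ?E'"
        unfolding merge_def by blast
      then show "x \<in> sym_reach ?E' `` {v}"
        using sym_reach_mono[of E ?E'] sym_reach_trans[of v w ?E' x] by blast
    qed
    have "v \<in> sym_reach E `` {v}" unfolding sym_reach_def by simp
    then show "sym_reach ?E' `` {v} \<subseteq> merge (sym_reach E `` {v})" unfolding merge_def by blast
  qed
  have image: "components V ?E' = merge ` components V E"
    unfolding components_def image_image merge_class ..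
  have "b \<in> sym_reach E `` {b}" unfolding sym_reach_def by simp
  then have distinct: "sym_reach E `` {a} \<noteq> sym_reach E `` {b}" using assms(4) by blast
  have "(a, b) \<in> sym_reach ?E'" "(b, a) \<in> sym_reach ?E'"
    unfolding sym_reach_def by auto
  then have "sym_reach ?E' `` {a} = sym_reach ?E' `` {b}"
    using sym_reach_trans[of a b ?E'] sym_reach_trans[of b a ?E'] by auto
  then have "merge (sym_reach E `` {a}) = merge (sym_reach E `` {b})"
    unfolding merge_class .
  then have "\<not> inj_on merge (components V E)"
    using distinct assms(2,3) unfolding components_def inj_on_def by blast
  moreover have "finite (components V E)" unfolding components_def using assms(1) by simp
  ultimately have "card (merge ` components V E) < card (components V E)"
    by (meson card_image_le inj_on_iff_eq_card le_neq_implies_less)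
  then show ?thesis unfolding image .
qed

lemma card_edges_add_components_le:
  assumes "finite E" "finite V" "E \<subseteq> V \<times> V"
    and "\<forall>(a, b)\<in>E. (b, a) \<notin> sym_reach (E - {(a, b)})"
  shows "card E + card (components V E) \<le> card V"
  using assms
proof (induction E rule: finite_induct)
  case empty
  have "components V {} = (\<lambda>v. {v}) ` V" unfolding components_def sym_reach_def by auto
  then show ?case by (simp add: card_image)
next
  case (insert e E)
  obtain a b where e: "e = (a, b)" by fastforce
  have "\<forall>(a', b')\<in>E. (b', a') \<notin> sym_reach (E - {(a', b')})"
  proof (clarify)
    fix a' b' assume "(a', b') \<in> E" "(b', a') \<in> sym_reach (E - {(a', b')})"
    moreover have "sym_reach (E - {(a', b')}) \<subseteq> sym_reach (insert e E - {(a', b')})"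
      by (rule sym_reach_mono) blast
    ultimately show False using insert.prems(3) by blast
  qed
  then have IH: "card E + card (components V E) \<le> card V"
    using insert.IH insert.prems(1,2) by simp
  have "(b, a) \<notin> sym_reach (insert e E - {e})" using insert.prems(3) e by simp
  moreover have "insert e E - {e} = E" using insert.hyps(2) by simp
  ultimately have "(b, a) \<notin> sym_reach E" by simp
  then have "(a, b) \<notin> sym_reach E" using sym_reach_sym[of a b E] by blast
  moreover have "a \<in> V" "b \<in> V" using insert.prems(2) e by auto
  ultimately have "card (components V (insert e E)) < card (components V E)"
    using card_components_insert_less[OF insert.prems(1)] e by blast
  then show ?case using IH insert.hyps by simp
qed

lemma card_le_if_reorientations_acyclic:
  assumes "finite V" "V \<noteq> {}" "E \<subseteq> V \<times> V"
    and acyclic: "\<forall>L\<subseteq>E. acyclic (reorient E L)"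
  shows "card E \<le> card V - 1"
proof -
  have forest: "\<forall>(a, b)\<in>E. (b, a) \<notin> sym_reach (E - {(a, b)})"
  proof (clarify)
    fix a b assume ab: "(a, b) \<in> E" and "(b, a) \<in> sym_reach (E - {(a, b)})"
    then obtain L where L: "L \<subseteq> E - {(a, b)}" and path: "(b, a) \<in> (reorient (E - {(a, b)}) L)\<^sup>*"
      using sym_reach_reorient_path[of b a "E - {(a, b)}"] by blast
    have "reorient (E - {(a, b)}) L \<subseteq> reorient E L"
      unfolding reorient_def by auto
    then have "(b, a) \<in> (reorient E L)\<^sup>*" using path rtrancl_mono by blast
    moreover have "(a, b) \<in> reorient E L" using L ab unfolding reorient_def by auto
    ultimately have "(a, a) \<in> (reorient E L)\<^sup>+" by (simp add: rtrancl_into_trancl2)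
    moreover have "acyclic (reorient E L)" using acyclic L by auto
    ultimately show False unfolding acyclic_def by simp
  qed
  have "finite E" using assms(1,3) finite_subset by blast
  then have "card E + card (components V E) \<le> card V"
    using assms(1,3) forest by (rule card_edges_add_components_le)
  moreover have "card (components V E) > 0"
    unfolding components_def using assms(1,2) by (simp add: card_gt_0_iff)
  ultimately show ?thesis by linarith
qed

lemma shatters_subset:
  assumes "shatters C Y" "Z \<subseteq> Y"
  shows "shatters C Z"
  unfolding shatters_def
proof (intro allI impI)
  fix L assume "L \<subseteq> Z"
  then obtain c where "c \<in> C" "\<forall>y\<in>Y. c y \<longleftrightarrow> y \<in> L"
    using assms unfolding shatters_def by (meson order_trans)
  then show "\<exists>c\<in>C. \<forall>y\<in>Z. c y \<longleftrightarrow> y \<in> L" using assms(2) by blast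
qed

lemma card_shattered_le_if_reorientations_acyclic:
  assumes "finite V" "V \<noteq> {}" "Y \<subseteq> V \<times> V" "shatters C Y"
    and acyclic: "\<forall>c\<in>C. acyclic (reorient Y {y\<in>Y. c y})"
  shows "card Y \<le> card V - 1"
proof (rule card_le_if_reorientations_acyclic[OF assms(1-3)], intro allI impI)
  fix L assume "L \<subseteq> Y"
  then obtain c where c: "c \<in> C" "\<forall>y\<in>Y. c y \<longleftrightarrow> y \<in> L"
    using assms(4) unfolding shatters_def by blast
  then have "{y\<in>Y. c y} = L" using \<open>L \<subseteq> Y\<close> by blast
  then show "acyclic (reorient Y L)" using acyclic c(1) by blast
qed

lemma shattered_image:
  assumes shatters: "shatters C Y" and factor: "\<forall>c\<in>C. \<exists>c'\<in>C'. \<forall>y\<in>Y. c y = c' (g y)"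
  shows "inj_on g Y" "shatters C' (g ` Y)"
proof -
  show "inj_on g Y"
  proof (rule inj_onI, rule ccontr)
    fix y1 y2 assume y: "y1 \<in> Y" "y2 \<in> Y" "g y1 = g y2" "y1 \<noteq> y2"
    then have "{y1} \<subseteq> Y" by simp
    then obtain c where c: "c \<in> C" "\<forall>y\<in>Y. c y \<longleftrightarrow> y \<in> {y1}"
      using shatters unfolding shatters_def by blast
    then obtain c' where "\<forall>y\<in>Y. c y = c' (g y)" using factor by blast
    then have "c y1 = c y2" using y by simp
    then show False using c(2) y by simp
  qed
  show "shatters C' (g ` Y)" unfolding shatters_def
  proof (intro allI impI)
    fix L' assume "L' \<subseteq> g ` Y"
    have "{y\<in>Y. g y \<in> L'} \<subseteq> Y" by blast
    then obtain c where c: "c \<in> C" "\<forall>y\<in>Y. c y \<longleftrightarrow> y \<in> {y\<in>Y. g y \<in> L'}"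
      using shatters unfolding shatters_def by blast
    then obtain c' where "c' \<in> C'" "\<forall>y\<in>Y. c y = c' (g y)" using factor by blast
    then show "\<exists>c'\<in>C'. \<forall>z\<in>g ` Y. c' z \<longleftrightarrow> z \<in> L'" using c(2) by auto
  qed
qed

lemma outcomes_eq_assignments: "outcomes n m = assignments m {0..<n}"
  unfolding outcomes_def assignments_def by auto

lemma assignments_insert:
  assumes "x \<notin> S"
  shows "assignments m (insert x S) = (\<lambda>(g, a). g(x := a)) ` (assignments m S \<times> {0..<m})"
proof (intro set_eqI iffI)
  fix h assume h: "h \<in> assignments m (insert x S)"
  have "h = (\<lambda>(g, a). g(x := a)) (h(x := 0), h x)" by simp
  moreover have "(h(x := 0), h x) \<in> assignments m S \<times> {0..<m}"
    using h assms unfolding assignments_def by auto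
  ultimately show "h \<in> (\<lambda>(g, a). g(x := a)) ` (assignments m S \<times> {0..<m})" by blast
qed (auto simp: assignments_def)

lemma card_assignments:
  assumes "finite S"
  shows "card (assignments m S) = m ^ card S"
  using assms
proof (induction S rule: finite_induct)
  case empty
  have "assignments m {} = {\<lambda>_. 0}" unfolding assignments_def by auto
  then show ?case by simp
next
  case (insert x S)
  have "inj_on (\<lambda>(g, a). g(x := a)) (assignments m S \<times> {0..<m})"
  proof (rule inj_onI, clarify)
    fix g a g' a' assume g: "g \<in> assignments m S" "g' \<in> assignments m S"
      and eq: "g(x := a) = g'(x := a')"
    have "g x = g' x" using g insert.hyps(2) unfolding assignments_def by simp
    then show "g = g' \<and> a = a'" using eq by (metis fun_upd_idem fun_upd_upd fun_upd_same)
  qed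
  then show ?case
    using insert assignments_insert[OF insert.hyps(2), of m]
    by (simp add: card_image card_cartesian_product)
qed

lemma finite_assignments:
  assumes "finite S"
  shows "finite (assignments m S)"
  using assms
proof (induction S rule: finite_induct)
  case empty
  have "assignments m {} = {\<lambda>_. 0}" unfolding assignments_def by auto
  then show ?case by simp
qed (simp add: assignments_insert)

lemma card_outcomes: "card (outcomes n m) = m ^ n"
  by (simp add: outcomes_eq_assignments card_assignments)

lemma finite_outcomes: "finite (outcomes n m)"
  by (simp add: outcomes_eq_assignments finite_assignments)

lemma proj_in_assignments: "u \<in> outcomes n m \<Longrightarrow> S \<subseteq> {0..<n} \<Longrightarrow> proj S u \<in> assignments m S"
  unfolding outcomes_def assignments_def proj_def by auto

lemma proj_eq_if_agree_outside:
  assumes "\<forall>j. j \<noteq> i \<longrightarrow> u j = u' j" "i \<notin> S"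
  shows "proj S u = proj S u'"
  using assms unfolding proj_def by (metis (full_types))

section \<open>Consistency of acyclic CP-nets\<close>

text \<open>Complete acyclic CP-nets without the minimality condition, which does not affect the
  induced preference relation.\<close>
definition total_acyclic_cpnet :: "nat \<Rightarrow> nat \<Rightarrow> cpnet \<Rightarrow> bool" where
  "total_acyclic_cpnet n m N \<longleftrightarrow> (\<forall>i<n. fst N i \<subseteq> {0..<n} - {i}) \<and>
     (\<forall>i<n. \<forall>\<gamma>\<in>assignments m (fst N i). strict_total_order_on m (snd N i \<gamma>)) \<and>
     acyclic (cpnet_graph n N)"

lemma total_acyclic_cpnetI: "complete_cpnet n m N \<Longrightarrow> acyclic_cpnet n N \<Longrightarrow> total_acyclic_cpnet n m N"
  unfolding complete_cpnet_def acyclic_cpnet_def total_acyclic_cpnet_def by blast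

lemma total_acyclic_cpnet_parents:
  assumes "total_acyclic_cpnet n m N" "i < n"
  shows "fst N i \<subseteq> {0..<n}" "i \<notin> fst N i"
  using assms unfolding total_acyclic_cpnet_def by auto

lemma total_acyclic_cpnet_order:
  assumes "total_acyclic_cpnet n m N" "i < n" "u \<in> outcomes n m"
  shows "strict_total_order_on m (snd N i (proj (fst N i) u))"
  using assms proj_in_assignments[OF assms(3) total_acyclic_cpnet_parents(1)[OF assms(1,2)]]
  unfolding total_acyclic_cpnet_def by blast

definition ancestors :: "nat \<Rightarrow> cpnet \<Rightarrow> nat \<Rightarrow> nat set" where
  "ancestors n N i = {j. (j, i) \<in> (cpnet_graph n N)\<^sup>+}"

definition depth :: "nat \<Rightarrow> cpnet \<Rightarrow> nat \<Rightarrow> nat" where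
  "depth n N i = card (ancestors n N i)"

lemma ancestors_subset:
  assumes "total_acyclic_cpnet n m N"
  shows "ancestors n N i \<subseteq> {0..<n}"
proof -
  have "cpnet_graph n N \<subseteq> {0..<n} \<times> {0..<n}"
    using assms unfolding total_acyclic_cpnet_def cpnet_graph_def by auto
  then have "(cpnet_graph n N)\<^sup>+ \<subseteq> {0..<n} \<times> {0..<n}" by (rule trancl_subset_Sigma)
  then show ?thesis unfolding ancestors_def by auto
qed

lemma depth_le:
  assumes "total_acyclic_cpnet n m N"
  shows "depth n N i \<le> n"
  unfolding depth_def using card_mono[OF _ ancestors_subset[OF assms]] by simp

lemma depth_parent_less:
  assumes N: "total_acyclic_cpnet n m N" and "i < n" "j \<in> fst N i"
  shows "depth n N j < depth n N i"
proof -
  have edge: "(j, i) \<in> cpnet_graph n N" using assms(2,3) unfolding cpnet_graph_def by auto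
  have "ancestors n N j \<subseteq> ancestors n N i"
    unfolding ancestors_def using edge by (auto intro: trancl_into_trancl)
  moreover have "j \<in> ancestors n N i" using edge unfolding ancestors_def by auto
  moreover have "j \<notin> ancestors n N j"
    using N unfolding ancestors_def total_acyclic_cpnet_def acyclic_def by auto
  ultimately have "ancestors n N j \<subset> ancestors n N i" by blast
  then show ?thesis
    unfolding depth_def using ancestors_subset[OF N] by (meson finite_atLeastLessThan psubset_card_mono rev_finite_subset)
qed

definition rank :: "nat \<Rightarrow> cpnet \<Rightarrow> nat \<Rightarrow> outcome \<Rightarrow> nat" where
  "rank m N l u = card {b. b < m \<and> snd N l (proj (fst N l) u) (u l) b}"

lemma rank_le: "rank m N l u \<le> m"
  unfolding rank_def using card_mono[of "{..<m}" "{b. b < m \<and> _ b}"] by auto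

lemma rank_eq_if_agree_outside:
  assumes "\<forall>j. j \<noteq> i \<longrightarrow> u j = u' j" "i \<notin> fst N l" "l \<noteq> i"
  shows "rank m N l u = rank m N l u'"
  unfolding rank_def using proj_eq_if_agree_outside[OF assms(1,2)] assms(1,3) by simp

lemma rank_less_if_improving:
  assumes N: "total_acyclic_cpnet n m N" and i: "i < n" and agree: "\<forall>j. j \<noteq> i \<longrightarrow> u j = u' j"
    and better: "snd N i (proj (fst N i) u) (u' i) (u i)"
    and u: "u \<in> outcomes n m" and u': "u' \<in> outcomes n m"
  shows "rank m N i u < rank m N i u'"
proof -
  let ?R = "snd N i (proj (fst N i) u)"
  have same_context: "proj (fst N i) u' = proj (fst N i) u"
    using proj_eq_if_agree_outside[OF agree total_acyclic_cpnet_parents(2)[OF N i]] by simp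
  have order: "strict_total_order_on m ?R" using total_acyclic_cpnet_order[OF N i u] .
  have "u i < m" "u' i < m" using u u' i unfolding outcomes_def by auto
  then have "{b. b < m \<and> ?R (u i) b} \<subset> {b. b < m \<and> ?R (u' i) b}"
    using order better unfolding strict_total_order_on_def by blast
  then show ?thesis unfolding rank_def same_context by (simp add: psubset_card_mono)
qed

lemma sum_pos_if_dominant_term:
  fixes d :: "'i \<Rightarrow> int" and e :: "'i \<Rightarrow> nat"
  assumes I: "finite I" "i \<in> I" and di: "1 \<le> d i" and c: "0 \<le> c" "int (card I) * c < B"
    and lower: "\<And>l. l \<in> I \<Longrightarrow> - c \<le> d l"
    and zero: "\<And>l. l \<in> I \<Longrightarrow> l \<noteq> i \<Longrightarrow> e i \<le> e l \<Longrightarrow> d l = 0"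
  shows "0 < (\<Sum>l\<in>I. d l * B ^ e l)"
proof -
  have B: "1 \<le> B" using c by (smt (verit) of_nat_0_le_iff zero_le_mult_iff)
  have split: "(\<Sum>l\<in>I. d l * B ^ e l) = d i * B ^ e i + (\<Sum>l\<in>I - {i}. d l * B ^ e l)"
    using I by (simp add: sum.remove)
  show ?thesis
  proof (cases "e i = 0")
    case True
    then have "(\<Sum>l\<in>I - {i}. d l * B ^ e l) = 0" using zero by simp
    then show ?thesis using split di True by simp
  next
    case False
    define T where "T = B ^ (e i - 1)"
    have T: "0 \<le> T" "B ^ e i = B * T"
      using B False unfolding T_def by (auto simp flip: power_Suc)
    have "- c * T \<le> d l * B ^ e l" if l: "l \<in> I - {i}" for l
    proof (cases "e i \<le> e l")
      case True
      then show ?thesis using zero l c(1) T(1) by simp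
    next
      case False
      then have "B ^ e l \<le> T" unfolding T_def using B by (simp add: power_increasing)
      then have "- c * T \<le> - c * B ^ e l" using c(1) by (simp add: mult_left_mono)
      also have "\<dots> \<le> d l * B ^ e l" using lower[of l] l B by (intro mult_right_mono) auto
      finally show ?thesis .
    qed
    then have "int (card (I - {i})) * (- c * T) \<le> (\<Sum>l\<in>I - {i}. d l * B ^ e l)"
      using sum_mono[of "I - {i}" "\<lambda>_. - c * T"] by simp
    moreover have "int (card (I - {i})) * (c * T) \<le> int (card I) * (c * T)"
      using I c(1) T(1) by (intro mult_right_mono) (auto simp: card_Diff1_le)
    moreover have "1 * B ^ e i \<le> d i * B ^ e i" using di B by (intro mult_right_mono) auto
    moreover have "int (card I) * c * T < B * T"
      using c(2) T B False unfolding T_def by (simp add: mult_strict_right_mono)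
    ultimately show ?thesis using split T(2) by (simp add: algebra_simps)
  qed
qed

text \<open>The weight of a variable decreases with its depth, so the gain in rank of the flipped
  variable outweighs any change in the ranks of its descendants.\<close>
definition potential :: "nat \<Rightarrow> nat \<Rightarrow> cpnet \<Rightarrow> outcome \<Rightarrow> int" where
  "potential n m N u = (\<Sum>l<n. int (rank m N l u) * int (n * m + 1) ^ (n - depth n N l))"

lemma potential_less_if_improving_flip:
  assumes N: "total_acyclic_cpnet n m N" and flip: "(u, u') \<in> improving_flips n m N"
  shows "potential n m N u < potential n m N u'"
proof -
  obtain i where i: "i < n" and agree: "\<forall>j. j \<noteq> i \<longrightarrow> u j = u' j"
    and better: "snd N i (proj (fst N i) u) (u' i) (u i)"
    and u: "u \<in> outcomes n m" and u': "u' \<in> outcomes n m"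
    using flip unfolding improving_flips_def by auto
  define d where "d l = int (rank m N l u') - int (rank m N l u)" for l
  have "0 < (\<Sum>l\<in>{..<n}. d l * int (n * m + 1) ^ (n - depth n N l))"
  proof (rule sum_pos_if_dominant_term[where c = "int m"])
    show "1 \<le> d i" unfolding d_def using rank_less_if_improving[OF N i agree better u u'] by simp
    show "- int m \<le> d l" for l unfolding d_def using rank_le[of m N l u] by simp
    show "d l = 0" if "l \<in> {..<n}" "l \<noteq> i" "n - depth n N i \<le> n - depth n N l" for l
    proof -
      have "depth n N l \<le> depth n N i" using that(3) depth_le[OF N, of i] depth_le[OF N, of l] by linarith
      then have "i \<notin> fst N l" using depth_parent_less[OF N, of l i] that(1) by auto
      then show ?thesis unfolding d_def using rank_eq_if_agree_outside[OF agree _ that(2)] by simp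
    qed
  qed (use i in auto)
  then show ?thesis
    unfolding potential_def d_def by (simp add: left_diff_distrib sum_subtractf)
qed

lemma acyclic_improving_flips:
  assumes "total_acyclic_cpnet n m N"
  shows "acyclic (improving_flips n m N)"
proof -
  have "potential n m N u < potential n m N u'" if "(u, u') \<in> (improving_flips n m N)\<^sup>+" for u u'
    using that by (induction rule: trancl_induct)
      (use potential_less_if_improving_flip[OF assms] in force)+
  then show ?thesis unfolding acyclic_def by blast
qed

section \<open>Upper bounds\<close>

lemma concept_of_swap_iff:
  assumes N: "total_acyclic_cpnet n m N" and u: "u \<in> outcomes n m" and u': "u' \<in> outcomes n m"
    and i: "i < n" and differ: "u i \<noteq> u' i" and agree: "\<forall>j. j \<noteq> i \<longrightarrow> u j = u' j"
  shows "concept_of n m N (u, u') \<longleftrightarrow> snd N i (proj (fst N i) u) (u i) (u' i)"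
proof -
  let ?R = "snd N i (proj (fst N i) u)"
  have "proj (fst N i) u' = proj (fst N i) u"
    using proj_eq_if_agree_outside[OF agree total_acyclic_cpnet_parents(2)[OF N i]] by simp
  then have flip_up: "(u', u) \<in> improving_flips n m N \<longleftrightarrow> ?R (u i) (u' i)"
    and flip_down: "(u, u') \<in> improving_flips n m N \<longleftrightarrow> ?R (u' i) (u i)"
    using u u' i agree differ unfolding improving_flips_def by (auto, metis+)
  have "?R (u i) (u' i) \<or> ?R (u' i) (u i)"
    using total_acyclic_cpnet_order[OF N i u] differ u u' i
    unfolding strict_total_order_on_def outcomes_def by blast
  moreover have "(u', u) \<in> (improving_flips n m N)\<^sup>+ \<Longrightarrow> (u, u') \<notin> improving_flips n m N"
    using acyclic_improving_flips[OF N] unfolding acyclic_def by (meson trancl_into_trancl2)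
  ultimately show ?thesis
    unfolding concept_of_def prefers_def fst_conv snd_conv using flip_up flip_down by blast
qed

lemma improving_flip_if_not_concept:
  assumes N: "total_acyclic_cpnet n m N" and y: "y \<in> swaps n m" and "\<not> concept_of n m N y"
  shows "y \<in> improving_flips n m N"
proof -
  obtain u u' where y_eq: "y = (u, u')" by fastforce
  then have u: "u \<in> outcomes n m" "u' \<in> outcomes n m" and "differ_in_one n u u'"
    using y unfolding swaps_def by auto
  then obtain i where i: "i < n" "u i \<noteq> u' i" "\<forall>j. j \<noteq> i \<longrightarrow> u j = u' j"
    unfolding differ_in_one_def by blast
  then have "\<not> snd N i (proj (fst N i) u) (u i) (u' i)"
    using concept_of_swap_iff[OF N u i] assms(3) y_eq by simp
  then have "snd N i (proj (fst N i) u) (u' i) (u i)"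
    using total_acyclic_cpnet_order[OF N i(1) u(1)] i u
    unfolding strict_total_order_on_def outcomes_def by blast
  then show ?thesis using u i y_eq unfolding improving_flips_def by auto
qed

lemma C_acE:
  assumes "c \<in> C_ac n m k"
  obtains N where "c = concept_of n m N" "total_acyclic_cpnet n m N" "bounded_cpnet n k N"
  using assms total_acyclic_cpnetI unfolding C_ac_def by blast

lemma card_shattered_le_outcomes:
  assumes Y: "Y \<subseteq> swaps n m" and shatters: "shatters (C_ac n m k) Y" and m: "1 \<le> m"
  shows "card Y \<le> m ^ n - 1"
proof -
  have "card Y \<le> card (outcomes n m) - 1"
  proof (rule card_shattered_le_if_reorientations_acyclic[OF finite_outcomes _ _ shatters])
    show "outcomes n m \<noteq> {}" using card_outcomes[of n m] m by fastforce
    show "Y \<subseteq> outcomes n m \<times> outcomes n m" using Y unfolding swaps_def by auto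
    show "\<forall>c\<in>C_ac n m k. acyclic (reorient Y {y \<in> Y. c y})"
    proof
      fix c assume "c \<in> C_ac n m k"
      then obtain N where c: "c = concept_of n m N" and N: "total_acyclic_cpnet n m N"
        by (rule C_acE)
      let ?F = "improving_flips n m N"
      have "reorient Y {y \<in> Y. c y} \<subseteq> ?F\<^sup>+"
        using improving_flip_if_not_concept[OF N] Y
        unfolding reorient_def c concept_of_def prefers_def by auto
      moreover have "acyclic (?F\<^sup>+)"
        using acyclic_improving_flips[OF N] unfolding acyclic_def by simp
      ultimately show "acyclic (reorient Y {y \<in> Y. c y})" by (rule acyclic_subset[rotated])
    qed
  qed
  then show ?thesis unfolding card_outcomes .
qed

lemma swap_agree_outside:
  assumes "(u, u') \<in> swaps n m" "u i \<noteq> u' i"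
  shows "\<forall>j. j \<noteq> i \<longrightarrow> u j = u' j"
proof -
  obtain k where "\<forall>j. j \<noteq> k \<longrightarrow> u j = u' j"
    using assms(1) unfolding swaps_def differ_in_one_def by blast
  moreover from this have "k = i" using assms(2) by (cases "k = i") auto
  ultimately show ?thesis by simp
qed

lemma concept_of_C0_on_variable:
  assumes "c \<in> C_ac n m 0" "i < n"
  obtains R where "strict_total_order_on m R"
    "\<And>y. y \<in> swaps n m \<Longrightarrow> fst y i \<noteq> snd y i \<Longrightarrow> c y \<longleftrightarrow> R (fst y i) (snd y i)"
proof -
  obtain N where c: "c = concept_of n m N" and N: "total_acyclic_cpnet n m N"
    and bounded: "bounded_cpnet n 0 N"
    using assms(1) by (rule C_acE)
  have "finite (fst N i)" using total_acyclic_cpnet_parents(1)[OF N assms(2)] finite_subset by blast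
  then have no_parents: "fst N i = {}" using bounded assms(2) unfolding bounded_cpnet_def by auto
  have "proj {} u = (\<lambda>_. 0)" for u unfolding proj_def by simp
  moreover have "(\<lambda>_. 0) \<in> assignments m {}" unfolding assignments_def by simp
  ultimately have "strict_total_order_on m (snd N i (\<lambda>_. 0))"
    using N assms(2) no_parents unfolding total_acyclic_cpnet_def by metis
  moreover have "c y \<longleftrightarrow> snd N i (\<lambda>_. 0) (fst y i) (snd y i)"
    if "y \<in> swaps n m" "fst y i \<noteq> snd y i" for y
  proof -
    obtain u u' where y: "y = (u, u')" by fastforce
    then have "u \<in> outcomes n m" "u' \<in> outcomes n m" "\<forall>j. j \<noteq> i \<longrightarrow> u j = u' j"
      using that swap_agree_outside[of u u' n m i] unfolding swaps_def by auto
    then show ?thesis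
      using concept_of_swap_iff[OF N _ _ assms(2)] that y c no_parents \<open>proj {} u = _\<close> by auto
  qed
  ultimately show ?thesis using that by blast
qed

lemma acyclic_reorient_by_order:
  assumes R: "strict_total_order_on m R" and E: "E \<subseteq> {(a, b). a < m \<and> b < m \<and> a \<noteq> b}"
  shows "acyclic (reorient E {p \<in> E. R (fst p) (snd p)})"
proof -
  let ?Q = "{(a, b). a < m \<and> b < m \<and> R b a}"
  have irrefl: "\<And>a. a < m \<Longrightarrow> \<not> R a a"
    and trans: "\<And>a b c. a < m \<Longrightarrow> b < m \<Longrightarrow> c < m \<Longrightarrow> R a b \<Longrightarrow> R b c \<Longrightarrow> R a c"
    and total: "\<And>a b. a < m \<Longrightarrow> b < m \<Longrightarrow> a \<noteq> b \<Longrightarrow> \<not> R a b \<Longrightarrow> R b a"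
    using R unfolding strict_total_order_on_def by blast+
  have "(a, b) \<in> ?Q" if "(a, b) \<in> reorient E {p \<in> E. R (fst p) (snd p)}" for a b
  proof (cases "(b, a) \<in> E \<and> R b a")
    case True
    then show ?thesis using E by auto
  next
    case False
    then have "(a, b) \<in> E" "\<not> R a b" using that unfolding reorient_def by auto
    then show ?thesis using E total by auto
  qed
  then have "reorient E {p \<in> E. R (fst p) (snd p)} \<subseteq> ?Q" by auto
  moreover have "trans ?Q" by (rule transI) (auto intro: trans)
  then have "acyclic ?Q" unfolding acyclic_def using irrefl by simp
  ultimately show ?thesis by (rule acyclic_subset[rotated])
qed

lemma card_shattered_C0_le:
  assumes Y: "Y \<subseteq> swaps n m" and shatters: "shatters (C_ac n m 0) Y" and m: "1 \<le> m"
  shows "card Y \<le> (m - 1) * n"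
proof -
  define Y_at where "Y_at i = {y \<in> Y. fst y i \<noteq> snd y i}" for i
  have card_Y_at: "card (Y_at i) \<le> m - 1" if i: "i < n" for i
  proof -
    define value_pair where "value_pair y = (fst y i, snd y i)" for y :: "outcome \<times> outcome"
    let ?orders = "{\<lambda>p. R (fst p) (snd p) | R. strict_total_order_on m R}"
    have factor: "\<forall>c\<in>C_ac n m 0. \<exists>c'\<in>?orders. \<forall>y\<in>Y_at i. c y = c' (value_pair y)"
    proof
      fix c assume c: "c \<in> C_ac n m 0"
      obtain R where R: "strict_total_order_on m R"
        and c_eq: "\<And>y. y \<in> swaps n m \<Longrightarrow> fst y i \<noteq> snd y i \<Longrightarrow> c y \<longleftrightarrow> R (fst y i) (snd y i)"
        using concept_of_C0_on_variable[OF c i] by blast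
      have "\<forall>y\<in>Y_at i. c y = R (fst (value_pair y)) (snd (value_pair y))"
        using Y c_eq unfolding Y_at_def value_pair_def by auto
      moreover have "(\<lambda>p. R (fst p) (snd p)) \<in> ?orders" using R by blast
      ultimately show "\<exists>c'\<in>?orders. \<forall>y\<in>Y_at i. c y = c' (value_pair y)"
        by (intro bexI[of _ "\<lambda>p. R (fst p) (snd p)"]) simp_all
    qed
    have "shatters (C_ac n m 0) (Y_at i)"
      using shatters by (rule shatters_subset) (auto simp: Y_at_def)
    note image = shattered_image[OF this factor]
    have pairs: "value_pair ` Y_at i \<subseteq> {(a, b). a < m \<and> b < m \<and> a \<noteq> b}"
      using Y i unfolding Y_at_def value_pair_def swaps_def outcomes_def by auto
    have "card (value_pair ` Y_at i) \<le> card {0..<m} - 1"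
    proof (rule card_shattered_le_if_reorientations_acyclic[OF _ _ _ image(2)])
      show "value_pair ` Y_at i \<subseteq> {0..<m} \<times> {0..<m}" using pairs by auto
      show "\<forall>c\<in>?orders. acyclic (reorient (value_pair ` Y_at i) {p \<in> value_pair ` Y_at i. c p})"
        using acyclic_reorient_by_order[OF _ pairs] by auto
    qed (use m in auto)
    then show ?thesis using card_image[OF image(1)] by simp
  qed
  have "Y = (\<Union>i<n. Y_at i)"
    using Y unfolding Y_at_def swaps_def differ_in_one_def by fastforce
  then have "card Y \<le> (\<Sum>i<n. card (Y_at i))"
    using card_UN_le[OF finite_lessThan, of Y_at n] by simp
  also have "\<dots> \<le> (\<Sum>i<n. m - 1)" using card_Y_at
    by (intro sum_mono) simp
  finally show ?thesis by (simp add: mult.commute)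
qed

section \<open>Removing dummy parents\<close>

definition essential_parents :: "nat \<Rightarrow> cpnet \<Rightarrow> nat \<Rightarrow> nat set" where
  "essential_parents m N i = {j \<in> fst N i. \<exists>\<gamma>\<in>assignments m (fst N i). \<exists>\<gamma>'\<in>assignments m (fst N i).
      (\<forall>l. l \<noteq> j \<longrightarrow> \<gamma> l = \<gamma>' l) \<and> (\<exists>a<m. \<exists>b<m. snd N i \<gamma> a b \<noteq> snd N i \<gamma>' a b)}"

definition minimize :: "nat \<Rightarrow> cpnet \<Rightarrow> cpnet" where
  "minimize m N = (essential_parents m N, snd N)"

lemma essential_parents_subset: "essential_parents m N i \<subseteq> fst N i"
  unfolding essential_parents_def by auto

lemma assignments_differ_subset:
  assumes "\<gamma> \<in> assignments m S" "\<delta> \<in> assignments m S"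
  shows "{j. \<gamma> j \<noteq> \<delta> j} \<subseteq> S"
proof
  fix j assume "j \<in> {j. \<gamma> j \<noteq> \<delta> j}"
  moreover have "j \<notin> S \<Longrightarrow> \<gamma> j = 0 \<and> \<delta> j = 0" using assms unfolding assignments_def by blast
  ultimately show "j \<in> S" by (cases "j \<in> S") auto
qed

lemma cpt_eq_if_differ_inessentially:
  assumes finite_parents: "finite (fst N i)"
    and \<gamma>: "\<gamma> \<in> assignments m (fst N i)" and \<delta>: "\<delta> \<in> assignments m (fst N i)"
    and inessential: "\<forall>j. \<gamma> j \<noteq> \<delta> j \<longrightarrow> j \<notin> essential_parents m N i"
    and "a < m" "b < m"
  shows "snd N i \<gamma> a b = snd N i \<delta> a b"
  using \<gamma> inessential
proof (induction "card {j. \<gamma> j \<noteq> \<delta> j}" arbitrary: \<gamma>)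
  case 0
  have "{j. \<gamma> j \<noteq> \<delta> j} \<subseteq> fst N i" using assignments_differ_subset "0.prems"(1) \<delta> .
  then have "finite {j. \<gamma> j \<noteq> \<delta> j}" using finite_parents by (rule finite_subset)
  then have "{j. \<gamma> j \<noteq> \<delta> j} = {}" using "0.hyps" by simp
  then have "\<gamma> = \<delta>" by auto
  then show ?case by simp
next
  case (Suc k)
  have "{j. \<gamma> j \<noteq> \<delta> j} \<noteq> {}" using Suc.hyps(2) by (intro notI) simp
  then obtain j where j: "\<gamma> j \<noteq> \<delta> j" by blast
  then have j_parent: "j \<in> fst N i" using assignments_differ_subset[OF Suc.prems(1) \<delta>] by blast
  define \<gamma>' where "\<gamma>' = \<gamma>(j := \<delta> j)"
  have \<gamma>': "\<gamma>' \<in> assignments m (fst N i)"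
    using Suc.prems(1) \<delta> j_parent unfolding assignments_def \<gamma>'_def by auto
  have "{l. \<gamma> l \<noteq> \<delta> l} \<subseteq> fst N i" using assignments_differ_subset Suc.prems(1) \<delta> .
  then have "finite {l. \<gamma> l \<noteq> \<delta> l}" using finite_parents finite_subset by blast
  moreover have "{l. \<gamma>' l \<noteq> \<delta> l} = {l. \<gamma> l \<noteq> \<delta> l} - {j}" unfolding \<gamma>'_def by auto
  ultimately have "k = card {l. \<gamma>' l \<noteq> \<delta> l}" using Suc.hyps(2) j by simp
  moreover have "\<forall>l. \<gamma>' l \<noteq> \<delta> l \<longrightarrow> l \<notin> essential_parents m N i"
    using Suc.prems(2) unfolding \<gamma>'_def by auto
  ultimately have "snd N i \<gamma>' a b = snd N i \<delta> a b" using Suc.hyps(1) \<gamma>' by blast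
  moreover have "snd N i \<gamma> a b = snd N i \<gamma>' a b"
  proof (rule ccontr)
    assume "snd N i \<gamma> a b \<noteq> snd N i \<gamma>' a b"
    then have "j \<in> essential_parents m N i"
      unfolding essential_parents_def using j_parent Suc.prems(1) \<gamma>' assms(5,6)
      by (intro CollectI conjI bexI[of _ \<gamma>] bexI[of _ \<gamma>']) (auto simp: \<gamma>'_def)
    then show False using Suc.prems(2) j by blast
  qed
  ultimately show ?case by simp
qed

lemma cpt_proj_essential_parents:
  assumes "finite (fst N i)" "\<gamma> \<in> assignments m (fst N i)" "a < m" "b < m"
  shows "snd N i (proj (essential_parents m N i) \<gamma>) a b = snd N i \<gamma> a b"
proof (rule cpt_eq_if_differ_inessentially[OF assms(1) _ assms(2) _ assms(3,4)])
  show "proj (essential_parents m N i) \<gamma> \<in> assignments m (fst N i)"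
    using assms(2,3) essential_parents_subset[of m N i] unfolding assignments_def proj_def by auto
  show "\<forall>j. proj (essential_parents m N i) \<gamma> j \<noteq> \<gamma> j \<longrightarrow> j \<notin> essential_parents m N i"
    unfolding proj_def by auto
qed

lemma improving_flips_minimize:
  assumes N: "total_acyclic_cpnet n m N"
  shows "improving_flips n m (minimize m N) = improving_flips n m N"
proof -
  have same_order: "snd N i (proj (essential_parents m N i) u) (u' i) (u i)
      \<longleftrightarrow> snd N i (proj (fst N i) u) (u' i) (u i)"
    if "u \<in> outcomes n m" "u' \<in> outcomes n m" "i < n" for u u' i
  proof -
    have parents: "fst N i \<subseteq> {0..<n}" using total_acyclic_cpnet_parents(1)[OF N that(3)] .
    then have "proj (essential_parents m N i) u = proj (essential_parents m N i) (proj (fst N i) u)"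
      using essential_parents_subset[of m N i] unfolding proj_def by (auto intro!: ext)
    moreover have "u i < m" "u' i < m" using that unfolding outcomes_def by auto
    ultimately show ?thesis
      using cpt_proj_essential_parents[OF finite_subset[OF parents] proj_in_assignments[OF that(1) parents]]
      by simp
  qed
  show ?thesis
  proof (intro set_eqI iffI)
    fix p assume "p \<in> improving_flips n m (minimize m N)"
    then show "p \<in> improving_flips n m N"
      using same_order unfolding improving_flips_def minimize_def by auto
  next
    fix p assume "p \<in> improving_flips n m N"
    then show "p \<in> improving_flips n m (minimize m N)"
      using same_order unfolding improving_flips_def minimize_def by auto
  qed
qed

lemma complete_cpnet_minimize:
  assumes N: "total_acyclic_cpnet n m N" and m: "1 \<le> m"
  shows "complete_cpnet n m (minimize m N)"
  unfolding complete_cpnet_def minimize_def fst_conv snd_conv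
proof (intro conjI allI impI ballI)
  fix i assume i: "i < n"
  have parents: "fst N i \<subseteq> {0..<n} - {i}" using N i unfolding total_acyclic_cpnet_def by blast
  then show "essential_parents m N i \<subseteq> {0..<n} - {i}" using essential_parents_subset by blast
  have finite_parents: "finite (fst N i)" using parents finite_subset by blast
  have assignments_subset: "assignments m (essential_parents m N i) \<subseteq> assignments m (fst N i)"
    using essential_parents_subset[of m N i] m unfolding assignments_def by auto
  fix \<gamma> assume "\<gamma> \<in> assignments m (essential_parents m N i)"
  then show "strict_total_order_on m (snd N i \<gamma>)"
    using N i assignments_subset unfolding total_acyclic_cpnet_def by blast
next
  fix i j assume i: "i < n" and j: "j \<in> essential_parents m N i"
  let ?E = "essential_parents m N i"
  have finite_parents: "finite (fst N i)"
    using total_acyclic_cpnet_parents(1)[OF N i] finite_subset by blast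
  obtain \<gamma> \<gamma>' a b where \<gamma>: "\<gamma> \<in> assignments m (fst N i)" "\<gamma>' \<in> assignments m (fst N i)"
    and agree: "\<forall>l. l \<noteq> j \<longrightarrow> \<gamma> l = \<gamma>' l" and ab: "a < m" "b < m"
    and differ: "snd N i \<gamma> a b \<noteq> snd N i \<gamma>' a b"
    using j unfolding essential_parents_def by blast
  have "proj ?E \<gamma> \<in> assignments m ?E" "proj ?E \<gamma>' \<in> assignments m ?E"
    using \<gamma> essential_parents_subset[of m N i] unfolding assignments_def proj_def by auto
  moreover have "\<forall>l. l \<noteq> j \<longrightarrow> proj ?E \<gamma> l = proj ?E \<gamma>' l" using agree unfolding proj_def by auto
  moreover have "snd N i (proj ?E \<gamma>) a b \<noteq> snd N i (proj ?E \<gamma>') a b"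
    using differ cpt_proj_essential_parents[OF finite_parents _ ab] \<gamma> by simp
  ultimately show "\<exists>\<gamma>\<in>assignments m ?E. \<exists>\<gamma>'\<in>assignments m ?E.
      (\<forall>l. l \<noteq> j \<longrightarrow> \<gamma> l = \<gamma>' l) \<and> (\<exists>a<m. \<exists>b<m. snd N i \<gamma> a b \<noteq> snd N i \<gamma>' a b)"
    using ab by (intro bexI[of _ "proj ?E \<gamma>"] bexI[of _ "proj ?E \<gamma>'"] conjI exI) auto
qed

lemma concept_of_in_C_ac:
  assumes N: "total_acyclic_cpnet n m N" and bounded: "bounded_cpnet n k N" and m: "1 \<le> m"
  shows "concept_of n m N \<in> C_ac n m k"
proof -
  have "cpnet_graph n (minimize m N) \<subseteq> cpnet_graph n N"
    unfolding cpnet_graph_def minimize_def using essential_parents_subset by fastforce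
  then have "acyclic_cpnet n (minimize m N)"
    using N unfolding acyclic_cpnet_def total_acyclic_cpnet_def by (meson acyclic_subset)
  moreover have "bounded_cpnet n k (minimize m N)"
    unfolding bounded_cpnet_def minimize_def fst_conv
  proof (intro allI impI)
    fix i assume i: "i < n"
    have "finite (fst N i)" using total_acyclic_cpnet_parents(1)[OF N i] finite_subset by blast
    then have "card (essential_parents m N i) \<le> card (fst N i)"
      by (rule card_mono[OF _ essential_parents_subset])
    moreover have "card (fst N i) \<le> k" using bounded i unfolding bounded_cpnet_def by blast
    ultimately show "card (essential_parents m N i) \<le> k" by linarith
  qed
  moreover have "concept_of n m (minimize m N) = concept_of n m N"
    unfolding concept_of_def prefers_def improving_flips_minimize[OF N] ..
  ultimately show ?thesis
    using complete_cpnet_minimize[OF N m] unfolding C_ac_def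
    by (intro CollectI exI[of _ "minimize m N"]) simp
qed

section \<open>Lower bound\<close>

definition prefix_parents :: "nat \<Rightarrow> nat \<Rightarrow> nat set" where
  "prefix_parents k i = {0..<min i k}"

text \<open>\<open>(i, \<gamma>, a)\<close> codes the swap between \<open>\<gamma>\<close> and \<open>\<gamma>(i := a)\<close>, where \<open>\<gamma>\<close> ranges over the
  assignments to the first \<open>min i k\<close> variables (so \<open>\<gamma> i = 0\<close>) and \<open>a \<noteq> 0\<close>.\<close>
definition swap_codes :: "nat \<Rightarrow> nat \<Rightarrow> nat \<Rightarrow> (nat \<times> outcome \<times> nat) set" where
  "swap_codes n m k = (SIGMA i:{..<n}. assignments m (prefix_parents k i) \<times> {1..<m})"

definition oriented :: "(outcome \<times> outcome) set \<Rightarrow> outcome \<times> outcome \<Rightarrow> outcome \<times> outcome" where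
  "oriented X p = (if p \<in> X then p else (snd p, fst p))"

definition code_swap :: "(outcome \<times> outcome) set \<Rightarrow> nat \<times> outcome \<times> nat \<Rightarrow> outcome \<times> outcome" where
  "code_swap X = (\<lambda>(i, \<gamma>, a). oriented X (\<gamma>(i := a), \<gamma>))"

definition swap_decode :: "outcome \<times> outcome \<Rightarrow> nat \<times> outcome \<times> nat" where
  "swap_decode p = (let i = (LEAST j. fst p j \<noteq> snd p j) in
     (i, if fst p i = 0 then fst p else snd p, fst p i + snd p i))"

lemma swap_codesD:
  assumes "(i, \<gamma>, a) \<in> swap_codes n m k"
  shows "i < n" "\<gamma> \<in> assignments m (prefix_parents k i)" "0 < a" "a < m" "\<gamma> i = 0"
    "\<gamma> \<in> outcomes n m" "\<gamma>(i := a) \<in> outcomes n m"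
proof -
  show i: "i < n" and \<gamma>: "\<gamma> \<in> assignments m (prefix_parents k i)" and "0 < a" and a: "a < m"
    using assms unfolding swap_codes_def by auto
  show "\<gamma> i = 0" using \<gamma> unfolding assignments_def prefix_parents_def by auto
  show "\<gamma> \<in> outcomes n m" "\<gamma>(i := a) \<in> outcomes n m"
    using \<gamma> i a unfolding assignments_def prefix_parents_def outcomes_def by auto
qed

lemma swap_decode_code_swap:
  assumes "t \<in> swap_codes n m k"
  shows "swap_decode (code_swap X t) = t"
proof -
  obtain i \<gamma> a where t: "t = (i, \<gamma>, a)" by (cases t) auto
  have "\<gamma> i = 0" "0 < a" using swap_codesD[OF assms[unfolded t]] by auto
  moreover have "(LEAST j. (\<gamma>(i := a)) j \<noteq> \<gamma> j) = i" "(LEAST j. \<gamma> j \<noteq> (\<gamma>(i := a)) j) = i"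
    using calculation by (auto intro!: Least_equality)
  ultimately show ?thesis
    unfolding t code_swap_def oriented_def swap_decode_def Let_def by auto
qed

lemma code_swap_in_Xswap:
  assumes X: "is_Xswap n m X" and t: "t \<in> swap_codes n m k"
  shows "code_swap X t \<in> X"
proof -
  obtain i \<gamma> a where t_eq: "t = (i, \<gamma>, a)" by (cases t) auto
  note code = swap_codesD[OF t[unfolded t_eq]]
  have "(\<gamma>(i := a), \<gamma>) \<in> swaps n m"
    unfolding swaps_def differ_in_one_def using code by auto
  then show ?thesis using X unfolding is_Xswap_def code_swap_def oriented_def t_eq by auto
qed

lemma geometric_sum_nat:
  fixes m :: nat
  assumes "1 \<le> m"
  shows "(\<Sum>i<k. m ^ i * (m - 1)) = m ^ k - 1"
proof (induction k)
  case (Suc k)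
  obtain p where m: "m = Suc p" using assms by (cases m) auto
  have "(\<Sum>i<Suc k. m ^ i * (m - 1)) = m ^ k - 1 + m ^ k * p" using Suc m by simp
  also have "\<dots> = m ^ Suc k - 1" using m by (simp add: algebra_simps)
  finally show ?case .
qed simp

lemma card_swap_codes:
  assumes "k \<le> n" "1 \<le> m"
  shows "card (swap_codes n m k) = (m - 1) * (n - k) * m ^ k + m ^ k - 1"
proof -
  have "card (swap_codes n m k) = (\<Sum>i<n. m ^ min i k * (m - 1))"
    unfolding swap_codes_def
    by (subst card_SigmaI) (auto simp: prefix_parents_def card_cartesian_product card_assignments finite_assignments)
  also have "\<dots> = (\<Sum>i<k. m ^ i * (m - 1)) + (\<Sum>i\<in>{k..<n}. m ^ k * (m - 1))"
  proof -
    have "{..<n} = {..<k} \<union> {k..<n}" using assms(1) by auto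
    then have "(\<Sum>i<n. m ^ min i k * (m - 1))
        = (\<Sum>i<k. m ^ min i k * (m - 1)) + (\<Sum>i\<in>{k..<n}. m ^ min i k * (m - 1))"
      by (metis finite_atLeastLessThan finite_lessThan ivl_disj_int_one(2) sum.union_disjoint)
    moreover have "(\<Sum>i<k. m ^ min i k * (m - 1)) = (\<Sum>i<k. m ^ i * (m - 1))"
      by (rule sum.cong) auto
    moreover have "(\<Sum>i\<in>{k..<n}. m ^ min i k * (m - 1)) = (\<Sum>i\<in>{k..<n}. m ^ k * (m - 1))"
      by (rule sum.cong) auto
    ultimately show ?thesis by simp
  qed
  also have "\<dots> = m ^ k - 1 + (n - k) * (m ^ k * (m - 1))"
    using geometric_sum_nat[OF assms(2)] by simp
  finally show ?thesis using one_le_power[OF assms(2), of k] by (simp add: algebra_simps)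
qed

definition split_key :: "nat \<Rightarrow> nat set \<Rightarrow> nat \<Rightarrow> nat" where
  "split_key m A a = (if a = 0 then m else if a \<in> A then 2 * m + a else a)"

definition split_order :: "nat \<Rightarrow> nat set \<Rightarrow> nat \<Rightarrow> nat \<Rightarrow> bool" where
  "split_order m A a b \<longleftrightarrow> split_key m A b < split_key m A a"

lemma strict_total_order_split_order: "strict_total_order_on m (split_order m A)"
proof -
  have "split_key m A a \<noteq> split_key m A b" if "a < m" "b < m" "a \<noteq> b" for a b
    using that unfolding split_key_def by auto
  then show ?thesis unfolding strict_total_order_on_def split_order_def by fastforce
qed

lemma split_order_zero:
  assumes "0 < a" "a < m"
  shows "split_order m A a 0 \<longleftrightarrow> a \<in> A" "split_order m A 0 a \<longleftrightarrow> a \<notin> A"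
  using assms unfolding split_order_def split_key_def by auto

lemma total_acyclic_prefix_net:
  assumes "\<And>i \<gamma>. strict_total_order_on m (cpt i \<gamma>)"
  shows "total_acyclic_cpnet n m (prefix_parents k, cpt)" "bounded_cpnet n k (prefix_parents k, cpt)"
proof -
  have "cpnet_graph n (prefix_parents k, cpt) \<subseteq> less_than"
    unfolding cpnet_graph_def prefix_parents_def by auto
  then have "acyclic (cpnet_graph n (prefix_parents k, cpt))"
    using wf_acyclic[OF wf_less_than] acyclic_subset by blast
  then show "total_acyclic_cpnet n m (prefix_parents k, cpt)"
    unfolding total_acyclic_cpnet_def prefix_parents_def using assms by auto
  show "bounded_cpnet n k (prefix_parents k, cpt)"
    unfolding bounded_cpnet_def prefix_parents_def by auto
qed

lemma concept_of_prefix_net_code: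
  assumes orders: "\<And>i \<gamma>. strict_total_order_on m (cpt i \<gamma>)" and t: "(i, \<gamma>, a) \<in> swap_codes n m k"
  shows "concept_of n m (prefix_parents k, cpt) (\<gamma>(i := a), \<gamma>) \<longleftrightarrow> cpt i \<gamma> a 0"
    "concept_of n m (prefix_parents k, cpt) (\<gamma>, \<gamma>(i := a)) \<longleftrightarrow> cpt i \<gamma> 0 a"
proof -
  note N = total_acyclic_prefix_net(1)[OF orders]
  note code = swap_codesD[OF t]
  have "i \<notin> prefix_parents k i" unfolding prefix_parents_def by simp
  then have "proj (prefix_parents k i) (\<gamma>(i := a)) = proj (prefix_parents k i) \<gamma>"
    by (intro proj_eq_if_agree_outside) auto
  also have "\<dots> = \<gamma>" using code(2) unfolding proj_def assignments_def by (auto intro!: ext)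
  finally have context_upd: "proj (prefix_parents k i) (\<gamma>(i := a)) = \<gamma>" .
  have context_eq: "proj (prefix_parents k i) \<gamma> = \<gamma>"
    using code(2) unfolding proj_def assignments_def by (auto intro!: ext)
  show "concept_of n m (prefix_parents k, cpt) (\<gamma>(i := a), \<gamma>) \<longleftrightarrow> cpt i \<gamma> a 0"
    using concept_of_swap_iff[OF N code(7,6,1)] code context_upd by simp
  show "concept_of n m (prefix_parents k, cpt) (\<gamma>, \<gamma>(i := a)) \<longleftrightarrow> cpt i \<gamma> 0 a"
    using concept_of_swap_iff[OF N code(6,7,1)] code context_eq by simp
qed

lemma shatters_code_swaps:
  assumes X: "is_Xswap n m X" and m: "1 \<le> m"
  shows "shatters (C_ac n m k) (code_swap X ` swap_codes n m k)"
  unfolding shatters_def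
proof (intro allI impI)
  fix L assume "L \<subseteq> code_swap X ` swap_codes n m k"
  define upward where
    "upward i \<gamma> = {a. code_swap X (i, \<gamma>, a) \<in> L \<longleftrightarrow> (\<gamma>(i := a), \<gamma>) \<in> X}" for i \<gamma>
  define N where "N = (prefix_parents k, \<lambda>i \<gamma>. split_order m (upward i \<gamma>))"
  have orders: "\<And>i \<gamma>. strict_total_order_on m (split_order m (upward i \<gamma>))"
    by (rule strict_total_order_split_order)
  have "concept_of n m N (code_swap X t) \<longleftrightarrow> code_swap X t \<in> L" if t: "t \<in> swap_codes n m k" for t
  proof -
    obtain i \<gamma> a where t_eq: "t = (i, \<gamma>, a)" by (cases t) auto
    note code = swap_codesD[OF t[unfolded t_eq]]
    note concept = concept_of_prefix_net_code[OF orders t[unfolded t_eq]]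
    show ?thesis
    proof (cases "(\<gamma>(i := a), \<gamma>) \<in> X")
      case True
      then show ?thesis
        using concept(1) split_order_zero(1)[OF code(3,4)]
        unfolding N_def t_eq code_swap_def oriented_def upward_def by simp
    next
      case False
      then show ?thesis
        using concept(2) split_order_zero(2)[OF code(3,4)]
        unfolding N_def t_eq code_swap_def oriented_def upward_def by simp
    qed
  qed
  moreover have "concept_of n m N \<in> C_ac n m k"
    unfolding N_def using total_acyclic_prefix_net[OF orders] m by (rule concept_of_in_C_ac)
  ultimately show "\<exists>c\<in>C_ac n m k. \<forall>y\<in>code_swap X ` swap_codes n m k. c y \<longleftrightarrow> y \<in> L"
    by blast
qed

lemma finite_Xswap: "is_Xswap n m X \<Longrightarrow> finite X"
  unfolding is_Xswap_def swaps_def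
  by (rule finite_subset[of _ "outcomes n m \<times> outcomes n m"]) (auto simp: finite_outcomes)

lemma card_le_VCD:
  assumes "finite X" "Y \<subseteq> X" "shatters C Y"
  shows "card Y \<le> VCD X C"
  unfolding VCD_def
proof (rule cSup_upper)
  show "card Y \<in> {card Y |Y. Y \<subseteq> X \<and> finite Y \<and> shatters C Y}"
    using assms finite_subset by blast
  show "bdd_above {card Y |Y. Y \<subseteq> X \<and> finite Y \<and> shatters C Y}"
    using assms(1) by (auto intro!: bdd_aboveI card_mono)
qed

lemma VCD_le:
  assumes "C \<noteq> {}" and "\<And>Y. Y \<subseteq> X \<Longrightarrow> shatters C Y \<Longrightarrow> card Y \<le> b"
  shows "VCD X C \<le> b"
proof -
  have "shatters C {}" using assms(1) unfolding shatters_def by auto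
  then show ?thesis unfolding VCD_def by (intro cSup_least) (use assms(2) in auto)
qed

lemma VCD_lower_bound:
  assumes X: "is_Xswap n m X" and "k \<le> n" "1 \<le> m"
  shows "(m - 1) * (n - k) * m ^ k + m ^ k - 1 \<le> VCD X (C_ac n m k)"
proof -
  have "inj_on (code_swap X) (swap_codes n m k)"
    by (rule inj_on_inverseI[of _ swap_decode]) (rule swap_decode_code_swap)
  then have "card (code_swap X ` swap_codes n m k) = (m - 1) * (n - k) * m ^ k + m ^ k - 1"
    using card_swap_codes[OF assms(2,3)] by (simp add: card_image)
  moreover have "code_swap X ` swap_codes n m k \<subseteq> X" using code_swap_in_Xswap[OF X] by blast
  ultimately show ?thesis
    using card_le_VCD[OF finite_Xswap[OF X]] shatters_code_swaps[OF X assms(3)] by metis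
qed

lemma real_Mk_eq:
  assumes m: "2 \<le> m"
  shows "(real m - 1) * M_k n m k = real ((m - 1) * (n - k) * m ^ k + m ^ k - 1)"
proof -
  have "(real m - 1) * M_k n m k = (real m - 1) * real (n - k) * real m ^ k + (real m ^ k - 1)"
    using m unfolding M_k_def by (simp add: field_simps)
  moreover have "1 \<le> m ^ k" using m by simp
  then have "real ((m - 1) * (n - k) * m ^ k + m ^ k - 1)
      = real (m - 1) * real (n - k) * real m ^ k + real m ^ k - 1"
    by (simp add: of_nat_diff)
  ultimately show ?thesis using m by (simp add: of_nat_diff)
qed

theorem theorem1:
  fixes n m k :: nat and X :: "(outcome \<times> outcome) set"
  assumes "n \<ge> 1" and "m \<ge> 2" and "k < n" and "is_Xswap n m X"
  shows "VCD X (C_ac n m (n - 1)) = m ^ n - 1 \<and>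
         VCD X (C_ac n m 0) = (m - 1) * n \<and>
         real (VCD X (C_ac n m k)) \<ge> (real m - 1) * M_k n m k \<and>
         (real m - 1) * M_k n m k = real ((m - 1) * (n - k) * m ^ k + m ^ k - 1)"
proof -
  have n: "n \<ge> 1" and m: "m \<ge> 1" and k: "k < n" and X: "is_Xswap n m X" using assms by auto
  have Xswaps: "Y \<subseteq> X \<Longrightarrow> Y \<subseteq> swaps n m" for Y using X unfolding is_Xswap_def by blast
  have nonempty: "C_ac n m k' \<noteq> {}" for k'
    using shatters_code_swaps[OF X m, of k'] unfolding shatters_def by blast
  have "VCD X (C_ac n m (n - 1)) \<le> m ^ n - 1"
    using nonempty card_shattered_le_outcomes[OF Xswaps _ m] by (rule VCD_le)
  moreover have "m ^ n - 1 \<le> VCD X (C_ac n m (n - 1))"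
  proof -
    obtain n' p where "n = Suc n'" "m = Suc p" using n m by (metis Suc_le_D One_nat_def)
    then have "(m - 1) * (n - (n - 1)) * m ^ (n - 1) + m ^ (n - 1) = m ^ n" by simp
    then show ?thesis using VCD_lower_bound[OF X _ m, of "n - 1"] by simp
  qed
  moreover have "VCD X (C_ac n m 0) \<le> (m - 1) * n"
    using nonempty card_shattered_C0_le[OF Xswaps _ m] by (rule VCD_le)
  moreover have "(m - 1) * n \<le> VCD X (C_ac n m 0)"
    using VCD_lower_bound[OF X _ m, of 0] by simp
  moreover have "real ((m - 1) * (n - k) * m ^ k + m ^ k - 1) \<le> real (VCD X (C_ac n m k))"
    using VCD_lower_bound[OF X _ m, of k] k by simp
  ultimately show ?thesis using real_Mk_eq[OF assms(2)] by simp
qed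

end
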